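(* Let $p$ be a prime and $a,b,c>0$ integers with $a,b\le p-1$ and $c\le b$. Assume either $a+b\le p-1$ or $c\le a+b-p+1$. Then $\gcd\big(f(a,b,c),f(a,b,c-1)\big)=1$ in $\overline{\mathbb{F}}_p[t]$.
   Context: For non-negative integers $a,b,c$, $f(a,b,c)\in\overline{\mathbb{F}}_p[t]$ is $f(a,b,c)=\sum_{i_2+i_3=c}\binom{a}{i_2}\binom{b}{i_3}t^{i_2}$ (binomial coefficients reduced mod $p$, $\binom{n}{i}=0$ for $i<0$ or $i>n$). *)

theory Defs
  imports "HOL-Computational_Algebra.Computational_Algebra"
begin

text \<open>f(a,b,c) = sum over i2 + i3 = c of binom(a,i2) binom(b,i3) t^i2, with coefficients
  taken in a ring (in characteristic p this reduces the binomials mod p).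
  Since i2, i3 are non-negative, i2 ranges over 0..c and i3 = c - i2.\<close>
definition fpoly :: "nat \<Rightarrow> nat \<Rightarrow> nat \<Rightarrow> 'a::comm_ring_1 poly" where
  "fpoly a b c = (\<Sum>i2\<le>c. monom (of_nat ((a choose i2) * (b choose (c - i2)))) i2)"

end

theory Submission
  imports Defs
begin

text \<open>The polynomial f(a,b,c) is the coefficient of x^c in (1 + t x)^a (1 + x)^b, and the
  differential equation of this product yields the three-term recurrence
  (k+1) f(k+1) = ((b - k) + (a - k) t) f(k) + (a + b + 1 - k) t f(k-1).
  A common divisor of f(k+1) and f(k) therefore divides (a + b + 1 - k) t f(k-1); it is prime
  to t because f(k) has the nonzero constant term binom(b,k), and a + b + 1 - k is a unit
  modulo p under the hypotheses. Induction on k from f(0) = 1 gives coprimality up to c.\<close>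

lemma coeff_fpoly:
  "coeff (fpoly a b c :: 'a::comm_ring_1 poly) n =
     (if n \<le> c then of_nat (a choose n) * of_nat (b choose (c - n)) else 0)"
  unfolding fpoly_def by (simp add: coeff_sum coeff_monom)

lemma of_nat_Suc_mult_choose_Suc:
  "of_nat (Suc k) * of_nat (n choose Suc k) =
     (of_nat n - of_nat k) * (of_nat (n choose k) :: 'a::comm_ring_1)"
proof (cases "k \<le> n")
  case True
  have "Suc k * (n choose Suc k) = (n - k) * (n choose k)"
    using times_binomial_minus1_eq[of "Suc k" n] binomial_absorb_comp[of n k] by simp
  then have "of_nat (Suc k) * of_nat (n choose Suc k) = (of_nat (n - k) * of_nat (n choose k) :: 'a)"
    by (metis of_nat_mult)
  then show ?thesis using True by simp
qed (simp add: binomial_eq_0)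

lemma fpoly_recurrence:
  assumes "1 \<le> k"
  shows "smult (of_nat (Suc k)) (fpoly a b (Suc k)) =
      [:of_nat b - of_nat k, of_nat a - of_nat k:] * fpoly a b k
    + [:0, of_nat (a + b + 1) - of_nat k:] * (fpoly a b (k - 1) :: 'a::comm_ring_1 poly)"
    (is "?l = ?r")
proof (rule poly_eqI)
  fix n
  show "coeff ?l n = coeff ?r n"
  proof (cases n)
    case 0
    then show ?thesis
      using of_nat_Suc_mult_choose_Suc[of k b, where 'a='a] by (simp add: coeff_fpoly coeff_pCons)
  next
    case (Suc m)
    consider "m < k" | "m = k" | "k < m" by linarith
    then show ?thesis
    proof cases
      case 1
      define j where "j = k - Suc m"
      have k: "k = Suc (m + j)" using 1 by (simp add: j_def)
      let ?x0 = "of_nat (a choose m) :: 'a" and ?x1 = "of_nat (a choose Suc m) :: 'a"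
      let ?y0 = "of_nat (b choose j) :: 'a" and ?y1 = "of_nat (b choose Suc j) :: 'a"
      have A: "(1 + of_nat m) * ?x1 - (of_nat a - of_nat m) * ?x0 = 0"
        using of_nat_Suc_mult_choose_Suc[of m a, where 'a='a] by simp
      have B: "(1 + of_nat j) * ?y1 - (of_nat b - of_nat j) * ?y0 = 0"
        using of_nat_Suc_mult_choose_Suc[of j b, where 'a='a] by simp
      have "(2 + (of_nat m + of_nat j)) * (?x1 * ?y1)
          - ((of_nat b - (1 + (of_nat m + of_nat j))) * (?x1 * ?y0)
             + (of_nat a - (1 + (of_nat m + of_nat j))) * (?x0 * ?y1)
             + (of_nat a + of_nat b - (of_nat m + of_nat j)) * (?x0 * ?y0))
        = (?y0 + ?y1) * ((1 + of_nat m) * ?x1 - (of_nat a - of_nat m) * ?x0)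
          + (?x0 + ?x1) * ((1 + of_nat j) * ?y1 - (of_nat b - of_nat j) * ?y0)"
        by (simp add: algebra_simps)
      then show ?thesis
        unfolding Suc k using A B by (simp add: coeff_fpoly coeff_pCons Suc_diff_le)
    qed (use assms of_nat_Suc_mult_choose_Suc[of k a, where 'a='a] in
          \<open>simp_all add: coeff_fpoly Suc coeff_pCons\<close>)
  qed
qed

lemma fpoly_0 [simp]: "fpoly a b 0 = 1"
  by (simp add: fpoly_def)

lemma poly_fpoly_0: "poly (fpoly a b c :: 'a::comm_ring_1 poly) 0 = of_nat (b choose c)"
  by (simp add: poly_0_coeff_0 coeff_fpoly)

lemma coprime_of_linear_combination:
  fixes f g h q r u :: "'a::ring_gcd"
  assumes "u * h = q * g + r * f" and "coprime r g" and "coprime g f"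
  shows "coprime h g"
proof (rule coprimeI)
  fix d
  assume "d dvd h" and "d dvd g"
  then have "d dvd u * h - q * g"
    by (simp add: dvd_diff)
  then have "d dvd r * f"
    using assms(1) by simp
  moreover have "coprime d r"
    using \<open>d dvd g\<close> dvd_refl assms(2)
    by (rule coprime_divisors[OF _ _ coprime_commute[THEN iffD1]])
  ultimately have "d dvd f"
    by (simp add: coprime_dvd_mult_right_iff)
  with assms(3) \<open>d dvd g\<close> show "is_unit d"
    by (rule coprime_common_divisor)
qed

lemma coprime_linear_monomial:
  fixes g :: "'a::field_gcd poly"
  assumes "e \<noteq> 0" and "poly g 0 \<noteq> 0"
  shows "coprime [:0, e:] g"
proof (rule prime_elem_imp_coprime)
  show "prime_elem [:0, e:]"
    using assms(1) by (rule prime_elem_linear_field_poly)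
  show "\<not> [:0, e:] dvd g"
  proof
    assume "[:0, e:] dvd g"
    then obtain q where "g = [:0, e:] * q" ..
    with assms(2) show False
      by simp
  qed
qed

lemma coprime_fpoly_Suc:
  fixes a b k :: nat
  assumes "1 \<le> k"
    and "of_nat (a + b + 1) - of_nat k \<noteq> (0::'a::field_gcd)"
    and "of_nat (b choose k) \<noteq> (0::'a)"
    and "coprime (fpoly a b k :: 'a poly) (fpoly a b (k - 1))"
  shows "coprime (fpoly a b (Suc k) :: 'a poly) (fpoly a b k)"
proof (rule coprime_of_linear_combination)
  show "[:of_nat (Suc k):] * fpoly a b (Suc k) =
      [:of_nat b - of_nat k, of_nat a - of_nat k:] * fpoly a b k
    + [:0, of_nat (a + b + 1) - of_nat k:] * (fpoly a b (k - 1) :: 'a poly)"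
    using fpoly_recurrence[OF assms(1)] by simp
  show "coprime [:0, of_nat (a + b + 1) - of_nat k:] (fpoly a b k :: 'a poly)"
    using assms(2,3) by (simp add: coprime_linear_monomial poly_fpoly_0)
qed (rule assms(4))

lemma coprime_fpoly_pred:
  fixes a b c :: nat
  assumes "1 \<le> c"
    and "\<And>k. 1 \<le> k \<Longrightarrow> k < c \<Longrightarrow> of_nat (a + b + 1) - of_nat k \<noteq> (0::'a::field_gcd)"
    and "\<And>k. 1 \<le> k \<Longrightarrow> k < c \<Longrightarrow> of_nat (b choose k) \<noteq> (0::'a)"
  shows "coprime (fpoly a b c :: 'a poly) (fpoly a b (c - 1))"
proof (rule dec_induct[of 1 c "\<lambda>m. coprime (fpoly a b m :: 'a poly) (fpoly a b (m - 1))"])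
  show "1 \<le> c"
    by (rule assms(1))
  show "coprime (fpoly a b 1 :: 'a poly) (fpoly a b (1 - 1))"
    by simp
  show "coprime (fpoly a b (Suc k) :: 'a poly) (fpoly a b (Suc k - 1))"
    if "1 \<le> k" "k < c" "coprime (fpoly a b k :: 'a poly) (fpoly a b (k - 1))" for k
    using coprime_fpoly_Suc[OF that(1) assms(2,3)[OF that(1,2)] that(3)] by simp
qed

lemma prime_not_dvd_choose:
  fixes p n k :: nat
  assumes "prime p" and "n < p" and "k \<le> n"
  shows "\<not> p dvd (n choose k)"
proof
  assume "p dvd (n choose k)"
  then have "p dvd fact k * fact (n - k) * (n choose k)"
    by simp
  then have "p dvd fact n"
    using binomial_fact_lemma[OF assms(3)] by simp
  with assms(1,2) show False
    by (simp add: prime_dvd_fact_iff)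
qed

lemma not_dvd_between_multiples:
  fixes p x :: nat
  assumes "p < x" and "x < 2 * p"
  shows "\<not> p dvd x"
proof
  assume "p dvd x"
  then have "p dvd x - p"
    by (simp add: dvd_diff_nat)
  with assms show False
    using nat_dvd_not_less[of "x - p" p] by linarith
qed

theorem lemmaA5:
  fixes p a b c :: nat
  assumes "prime p"
    and "CHAR('k::{alg_closed_field,field_gcd}) = p"
    and "0 < a" "0 < b" "0 < c"
    and "a \<le> p - 1" "b \<le> p - 1" "c \<le> b"
    and "a + b \<le> p - 1 \<or> int c \<le> int a + int b - int p + 1"
  shows "gcd (fpoly a b c :: 'k poly) (fpoly a b (c - 1)) = 1"
proof -
  have of_nat_nonzero: "of_nat n \<noteq> (0::'k)" if "\<not> p dvd n" for n
    using that assms(2) by (simp add: of_nat_eq_0_iff_char_dvd)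
  have not_dvd_weight: "\<not> p dvd (a + b + 1 - k)" if "1 \<le> k" "k < c" for k
  proof (cases "a + b \<le> p - 1")
    case True
    then show ?thesis
      using that assms(8) by (intro nat_dvd_not_less) auto
  next
    case False
    then show ?thesis
      using that assms(6-9) by (intro not_dvd_between_multiples) linarith+
  qed
  have "of_nat (a + b + 1) - of_nat k \<noteq> (0::'k)" if "1 \<le> k" "k < c" for k
    using of_nat_nonzero[OF not_dvd_weight[OF that]] that assms(8) by (simp add: of_nat_diff)
  moreover have "of_nat (b choose k) \<noteq> (0::'k)" if "k < c" for k
    using that assms(1,4,7,8) by (intro of_nat_nonzero prime_not_dvd_choose) auto
  ultimately have "coprime (fpoly a b c :: 'k poly) (fpoly a b (c - 1))"
    using assms(5) by (intro coprime_fpoly_pred) auto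
  then show ?thesis
    by (rule coprime_imp_gcd_eq_1)
qed

end
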